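(* In any instance of the binary voting game with $N$ agents, every regular strategy profile $\Sigma_N$ is an $\varepsilon$-strong Bayes Nash Equilibrium with $\varepsilon=2B(B+1)\,(1-A(\Sigma_N))$, where $B$ is the upper bound of the utility functions.
   Context: Binary voting game. $N$ agents each vote for $\mathbf{A}$ or $\mathbf{R}$. Unobserved world state $W\in\{L,H\}$ with common prior $P_L,P_H>0$. Conditional on $W$, each agent independently receives a signal $S_n\in\{l,h\}$ with $P_{sw}=\Pr[S_n=s\mid W=w]$, $P_{hH}>P_{hL}$, $P_{lH}<P_{lL}$. With threshold $\mu\in(0,1)$, $\mathbf{A}$ wins iff at least $\mu N$ agents vote $\mathbf{A}$, else $\mathbf{R}$. Agent $n$ has utility $v_n:\{L,H\}\times\{\mathbf{A},\mathbf{R}\}\to\{0,\dots,B\}$ ($B$ a positive integer) with $v_n(H,\mathbf{A})>v_n(L,\mathbf{A})$, $v_n(H,\mathbf{R})<v_n(L,\mathbf{R})$. Every agent is friendly ($v_n(H,\mathbf{A})>v_n(L,\mathbf{A})>v_n(L,\mathbf{R})>v_n(H,\mathbf{R})$), unfriendly ($v_n(L,\mathbf{R})>v_n(H,\mathbf{R})>v_n(H,\mathbf{A})>v_n(L,\mathbf{A})$), or contingent ($v_n(H,\mathbf{A})>v_n(H,\mathbf{R})$, $v_n(L,\mathbf{R})>v_n(L,\mathbf{A})$). With fixed constants $\alpha_F,\alpha_U,\alpha_C\ge0$ summing to $1$: $\lfloor\alpha_F N\rfloor$ friendly, $\lfloor\alpha_U N\rfloor$ unfriendly, the rest contingent. Standing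 assumption: $\alpha_F<\mu$ and $\alpha_U<1-\mu$, so the informed majority decision is $\mathbf{A}$ in $H$ and $\mathbf{R}$ in $L$. Strategy $\sigma=(\beta_l,\beta_h)$, $\beta_s$ = probability of voting $\mathbf{A}$ on signal $s$. Regular profile: friendly agents always vote $\mathbf{A}$, unfriendly agents always vote $\mathbf{R}$. $\lambda^{\mathbf{X}}_w(\Sigma)$: ex-ante probability that $\mathbf{X}$ wins in state $w$. Fidelity $A(\Sigma)=P_L\lambda^{\mathbf{R}}_L(\Sigma)+P_H\lambda^{\mathbf{A}}_H(\Sigma)$. Expected utility $u_n(\Sigma)=\sum_w P_w(\lambda^{\mathbf{A}}_w(\Sigma)v_n(w,\mathbf{A})+\lambda^{\mathbf{R}}_w(\Sigma)v_n(w,\mathbf{R}))$. $\Sigma$ is an $\varepsilon$-strong Bayes Nash Equilibrium if there is no set $D$ of agents and profile $\Sigma'$ with $\sigma'_n=\sigma_n$ for $n\notin D$, $u_n(\Sigma')\ge u_n(\Sigma)$ for all $n\in D$ and $u_n(\Sigma')>u_n(\Sigma)+\varepsilon$ for some $n\in D$. *)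

theory Defs
  imports Main "HOL-Library.Multiset" Complex_Main
begin

datatype world = L | H
datatype signal = Sl | Sh
datatype outcome = Acc | Rej

text \<open>A strategy is a pair (beta_l, beta_h): probability of voting Acc on signal l / h.
  A profile is a function from agent indices (0..<N) to strategies.
  Ps s w = Pr[S_n = s | W = w].\<close>

definition valid_profile :: "nat \<Rightarrow> (nat \<Rightarrow> real \<times> real) \<Rightarrow> bool" where
  "valid_profile N \<Sigma> \<longleftrightarrow> (\<forall>n<N. 0 \<le> fst (\<Sigma> n) \<and> fst (\<Sigma> n) \<le> 1 \<and> 0 \<le> snd (\<Sigma> n) \<and> snd (\<Sigma> n) \<le> 1)"

definition pvote :: "(signal \<Rightarrow> world \<Rightarrow> real) \<Rightarrow> (nat \<Rightarrow> real \<times> real) \<Rightarrow> world \<Rightarrow> nat \<Rightarrow> real" where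
  "pvote Ps \<Sigma> w n = Ps Sl w * fst (\<Sigma> n) + Ps Sh w * snd (\<Sigma> n)"

definition wins :: "nat \<Rightarrow> real \<Rightarrow> outcome \<Rightarrow> nat set \<Rightarrow> bool" where
  "wins N \<mu> X S \<longleftrightarrow> (if X = Acc then \<mu> * real N \<le> real (card S) else real (card S) < \<mu> * real N)"

definition lam :: "nat \<Rightarrow> real \<Rightarrow> (signal \<Rightarrow> world \<Rightarrow> real) \<Rightarrow> (nat \<Rightarrow> real \<times> real) \<Rightarrow> world \<Rightarrow> outcome \<Rightarrow> real" where
  "lam N \<mu> Ps \<Sigma> w X =
     (\<Sum>S\<in>{S. S \<subseteq> {..<N} \<and> wins N \<mu> X S}.
        (\<Prod>n\<in>S. pvote Ps \<Sigma> w n) * (\<Prod>n\<in>{..<N} - S. 1 - pvote Ps \<Sigma> w n))"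

definition fidelity :: "nat \<Rightarrow> real \<Rightarrow> (world \<Rightarrow> real) \<Rightarrow> (signal \<Rightarrow> world \<Rightarrow> real) \<Rightarrow> (nat \<Rightarrow> real \<times> real) \<Rightarrow> real" where
  "fidelity N \<mu> Pw Ps \<Sigma> = Pw L * lam N \<mu> Ps \<Sigma> L Rej + Pw H * lam N \<mu> Ps \<Sigma> H Acc"

definition utility :: "nat \<Rightarrow> real \<Rightarrow> (world \<Rightarrow> real) \<Rightarrow> (signal \<Rightarrow> world \<Rightarrow> real) \<Rightarrow> (nat \<Rightarrow> world \<Rightarrow> outcome \<Rightarrow> nat) \<Rightarrow> nat \<Rightarrow> (nat \<Rightarrow> real \<times> real) \<Rightarrow> real" where
  "utility N \<mu> Pw Ps v n \<Sigma> =
     (\<Sum>w\<in>{L, H}. Pw w * (lam N \<mu> Ps \<Sigma> w Acc * real (v n w Acc) + lam N \<mu> Ps \<Sigma> w Rej * real (v n w Rej)))"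

definition eps_strong_BNE :: "nat \<Rightarrow> real \<Rightarrow> (world \<Rightarrow> real) \<Rightarrow> (signal \<Rightarrow> world \<Rightarrow> real) \<Rightarrow> (nat \<Rightarrow> world \<Rightarrow> outcome \<Rightarrow> nat) \<Rightarrow> real \<Rightarrow> (nat \<Rightarrow> real \<times> real) \<Rightarrow> bool" where
  "eps_strong_BNE N \<mu> Pw Ps v \<epsilon> \<Sigma> \<longleftrightarrow>
     \<not> (\<exists>D \<Sigma>'. D \<subseteq> {..<N} \<and> valid_profile N \<Sigma>' \<and> (\<forall>n<N. n \<notin> D \<longrightarrow> \<Sigma>' n = \<Sigma> n)
          \<and> (\<forall>n\<in>D. utility N \<mu> Pw Ps v n \<Sigma>' \<ge> utility N \<mu> Pw Ps v n \<Sigma>)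
          \<and> (\<exists>n\<in>D. utility N \<mu> Pw Ps v n \<Sigma>' > utility N \<mu> Pw Ps v n \<Sigma> + \<epsilon>))"

definition friendly :: "(world \<Rightarrow> outcome \<Rightarrow> nat) \<Rightarrow> bool" where
  "friendly u \<longleftrightarrow> u H Acc > u L Acc \<and> u L Acc > u L Rej \<and> u L Rej > u H Rej"

definition unfriendly :: "(world \<Rightarrow> outcome \<Rightarrow> nat) \<Rightarrow> bool" where
  "unfriendly u \<longleftrightarrow> u L Rej > u H Rej \<and> u H Rej > u H Acc \<and> u H Acc > u L Acc"

definition contingent :: "(world \<Rightarrow> outcome \<Rightarrow> nat) \<Rightarrow> bool" where
  "contingent u \<longleftrightarrow> u H Acc > u H Rej \<and> u L Rej > u L Acc"

definition regular :: "nat \<Rightarrow> (nat \<Rightarrow> world \<Rightarrow> outcome \<Rightarrow> nat) \<Rightarrow> (nat \<Rightarrow> real \<times> real) \<Rightarrow> bool" where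
  "regular N v \<Sigma> \<longleftrightarrow> (\<forall>n<N. (friendly (v n) \<longrightarrow> \<Sigma> n = (1, 1)) \<and> (unfriendly (v n) \<longrightarrow> \<Sigma> n = (0, 0)))"

end

theory Submission
  imports Defs
begin

text \<open>
  Let \<open>\<delta> = 1 - A(\<Sigma>)\<close> and, for a deviation, let x and y be the changes of the probability
  of acceptance in states L and H, weighted by the prior. A member whose premia for
  acceptance are \<open>a = v(L,A) - v(L,R)\<close> and \<open>b = v(H,A) - v(H,R)\<close> gains \<open>x a + y b\<close>, and
  \<open>-\<delta> \<le> x\<close>, \<open>y \<le> \<delta>\<close>: acceptance can fall in L, or rise in H, only by the probability with
  which \<open>\<Sigma>\<close> decides wrongly.
  If all deviators are friendly (unfriendly), under a regular profile they already vote
  A (R), so by monotonicity of the threshold rule the deviation can only lower (raise)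
  acceptance in both states, which hurts each of them. Otherwise the deviators contain
  a contingent member, whose nonnegative gain forces \<open>|x|, |y| \<le> B \<delta>\<close>, or a friendly and
  an unfriendly member, whose nonnegative gains force \<open>x \<le> 0 \<le> y\<close>; either way no member
  gains more than \<open>2 B (B + 1) \<delta>\<close>.
\<close>

definition random_subset_prob :: "'a set \<Rightarrow> ('a \<Rightarrow> real) \<Rightarrow> ('a set \<Rightarrow> bool) \<Rightarrow> real" where
  "random_subset_prob I p P =
     (\<Sum>S\<in>Pow I. if P S then (\<Prod>i\<in>S. p i) * (\<Prod>i\<in>I - S. 1 - p i) else 0)"

lemma random_subset_prob_insert:
  assumes "finite I" and "i \<notin> I"
  shows "random_subset_prob (insert i I) p P =
           p i * random_subset_prob I p (\<lambda>S. P (insert i S)) + (1 - p i) * random_subset_prob I p P"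
proof -
  define f where
    "f S = (if P S then (\<Prod>j\<in>S. p j) * (\<Prod>j\<in>insert i I - S. 1 - p j) else 0)" for S
  have inj: "inj_on (insert i) (Pow I)"
    using \<open>i \<notin> I\<close> by (intro inj_onI) (metis PowD insert_ident subsetD)
  have "random_subset_prob (insert i I) p P = sum f (Pow I) + sum f (insert i ` Pow I)"
    unfolding random_subset_prob_def f_def Pow_insert
    by (rule sum.union_disjoint) (use assms in auto)
  also have "sum f (insert i ` Pow I) = p i * random_subset_prob I p (\<lambda>S. P (insert i S))"
    unfolding sum.reindex[OF inj] random_subset_prob_def sum_distrib_left
  proof (rule sum.cong[OF refl])
    fix S assume "S \<in> Pow I"
    then have "finite S" "i \<notin> S" "insert i I - insert i S = I - S"
      using assms finite_subset by auto
    then show "(f \<circ> insert i) S =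
        p i * (if P (insert i S) then (\<Prod>j\<in>S. p j) * (\<Prod>j\<in>I - S. 1 - p j) else 0)"
      by (simp add: f_def)
  qed
  also have "sum f (Pow I) = (1 - p i) * random_subset_prob I p P"
    unfolding random_subset_prob_def sum_distrib_left
  proof (rule sum.cong[OF refl])
    fix S assume "S \<in> Pow I"
    then have "insert i I - S = insert i (I - S)" "i \<notin> I - S" "finite (I - S)"
      using assms by auto
    then show "f S = (1 - p i) * (if P S then (\<Prod>j\<in>S. p j) * (\<Prod>j\<in>I - S. 1 - p j) else 0)"
      by (simp add: f_def)
  qed
  finally show ?thesis by simp
qed

lemma random_subset_prob_mono_event:
  assumes "\<And>i. i \<in> I \<Longrightarrow> 0 \<le> p i" "\<And>i. i \<in> I \<Longrightarrow> p i \<le> 1"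
    and "\<And>S. S \<subseteq> I \<Longrightarrow> P S \<Longrightarrow> P' S"
  shows "random_subset_prob I p P \<le> random_subset_prob I p P'"
  unfolding random_subset_prob_def
proof (rule sum_mono)
  fix S assume S: "S \<in> Pow I"
  then have "0 \<le> (\<Prod>i\<in>S. p i) * (\<Prod>i\<in>I - S. 1 - p i)"
    using assms(1,2) by (intro mult_nonneg_nonneg prod_nonneg) auto
  then show "(if P S then (\<Prod>i\<in>S. p i) * (\<Prod>i\<in>I - S. 1 - p i) else 0)
      \<le> (if P' S then (\<Prod>i\<in>S. p i) * (\<Prod>i\<in>I - S. 1 - p i) else 0)"
    using assms(3) S by auto
qed

lemma random_subset_prob_nonneg:
  assumes "\<And>i. i \<in> I \<Longrightarrow> 0 \<le> p i" "\<And>i. i \<in> I \<Longrightarrow> p i \<le> 1"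
  shows "0 \<le> random_subset_prob I p P"
  using random_subset_prob_mono_event[of I p "\<lambda>_. False" P] assms
  by (simp add: random_subset_prob_def)

lemma random_subset_prob_compl:
  assumes "finite I"
  shows "random_subset_prob I p P + random_subset_prob I p (\<lambda>S. \<not> P S) = 1"
proof -
  have "random_subset_prob I p P + random_subset_prob I p (\<lambda>S. \<not> P S)
      = (\<Sum>S\<in>Pow I. (\<Prod>i\<in>S. p i) * (\<Prod>i\<in>I - S. 1 - p i))"
    unfolding random_subset_prob_def sum.distrib[symmetric] by (rule sum.cong) auto
  also have "\<dots> = (\<Prod>i\<in>I. p i + (1 - p i))"
    by (rule prod_add[OF assms, symmetric])
  finally show ?thesis by simp
qed

lemma random_subset_prob_mono_upclosed:
  assumes "finite I"
    and "\<And>i. i \<in> I \<Longrightarrow> 0 \<le> p i" "\<And>i. i \<in> I \<Longrightarrow> p i \<le> q i" "\<And>i. i \<in> I \<Longrightarrow> q i \<le> 1"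
    and up: "\<And>S i. P S \<Longrightarrow> P (insert i S)"
  shows "random_subset_prob I p P \<le> random_subset_prob I q P"
  using assms
proof (induction I arbitrary: P rule: finite_induct)
  case empty
  show ?case unfolding random_subset_prob_def Pow_empty by simp
next
  case (insert i I)
  let ?Q = "random_subset_prob I q"
  let ?Pi = "\<lambda>S. P (insert i S)"
  have "\<And>S j. ?Pi S \<Longrightarrow> ?Pi (insert j S)"
    using insert.prems(4) by (metis insert_commute)
  then have forced: "random_subset_prob I p ?Pi \<le> ?Q ?Pi"
    and free: "random_subset_prob I p P \<le> ?Q P"
    using insert.IH insert.prems by auto
  have slope: "?Q P \<le> ?Q ?Pi"
    using insert.prems by (intro random_subset_prob_mono_event) (auto dest: order_trans)
  have pi: "0 \<le> p i" "p i \<le> q i" "q i \<le> 1"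
    using insert.prems by auto
  have "p i * random_subset_prob I p ?Pi + (1 - p i) * random_subset_prob I p P
      \<le> p i * ?Q ?Pi + (1 - p i) * ?Q P"
    using forced free pi by (intro add_mono mult_left_mono) auto
  also have "\<dots> = ?Q P + p i * (?Q ?Pi - ?Q P)"
    by (simp add: algebra_simps)
  also have "\<dots> \<le> ?Q P + q i * (?Q ?Pi - ?Q P)"
    using slope pi by (intro add_left_mono mult_right_mono) auto
  also have "\<dots> = q i * ?Q ?Pi + (1 - q i) * ?Q P"
    by (simp add: algebra_simps)
  finally show ?case
    using insert.hyps by (simp add: random_subset_prob_insert)
qed

lemma lam_eq_random_subset_prob:
  "lam N \<mu> Ps \<Sigma> w X = random_subset_prob {..<N} (pvote Ps \<Sigma> w) (wins N \<mu> X)"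
proof -
  have "{S. S \<subseteq> {..<N} \<and> wins N \<mu> X S} = {S \<in> Pow {..<N}. wins N \<mu> X S}"
    by auto
  then show ?thesis
    unfolding lam_def random_subset_prob_def by (simp add: sum.inter_filter[symmetric])
qed

lemma wins_Rej_iff: "wins N \<mu> Rej S \<longleftrightarrow> \<not> wins N \<mu> Acc S"
  by (auto simp: wins_def)

lemma wins_Acc_insert: "wins N \<mu> Acc S \<Longrightarrow> wins N \<mu> Acc (insert i S)"
  using card_insert_le[of S i] by (auto simp: wins_def intro: order_trans)

lemma pvote_always_Acc:
  "Ps Sl w + Ps Sh w = 1 \<Longrightarrow> \<Sigma> n = (1, 1) \<Longrightarrow> pvote Ps \<Sigma> w n = 1"
  by (simp add: pvote_def)

lemma pvote_always_Rej: "\<Sigma> n = (0, 0) \<Longrightarrow> pvote Ps \<Sigma> w n = 0"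
  by (simp add: pvote_def)

definition acc_premium :: "(world \<Rightarrow> outcome \<Rightarrow> nat) \<Rightarrow> world \<Rightarrow> real" where
  "acc_premium u w = real (u w Acc) - real (u w Rej)"

lemma abs_acc_premium_le: "u w Acc \<le> B \<Longrightarrow> u w Rej \<le> B \<Longrightarrow> \<bar>acc_premium u w\<bar> \<le> real B"
  by (simp add: acc_premium_def)

lemma friendly_acc_premium: "friendly u \<Longrightarrow> 0 < acc_premium u L \<and> acc_premium u L < acc_premium u H"
  by (simp add: friendly_def acc_premium_def)

lemma unfriendly_acc_premium: "unfriendly u \<Longrightarrow> acc_premium u L < acc_premium u H \<and> acc_premium u H < 0"
  by (simp add: unfriendly_def acc_premium_def)

lemma contingent_acc_premium: "contingent u \<Longrightarrow> acc_premium u L \<le> -1 \<and> 1 \<le> acc_premium u H"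
  by (simp add: contingent_def acc_premium_def)

lemma gain_le_if_abs_le:
  fixes x y a b r B :: real
  assumes "\<bar>x\<bar> \<le> r" "\<bar>y\<bar> \<le> r" "\<bar>a\<bar> \<le> B" "\<bar>b\<bar> \<le> B"
  shows "x * a + y * b \<le> 2 * B * r"
proof -
  have "0 \<le> r" using assms(1) abs_ge_zero[of x] by linarith
  then have "x * a \<le> r * B" "y * b \<le> r * B"
    using abs_ge_self[of "x * a"] abs_ge_self[of "y * b"]
      mult_mono[OF assms(1,3)] mult_mono[OF assms(2,4)]
    by (simp_all add: abs_mult)
  then show ?thesis by (simp add: algebra_simps)
qed

lemma abs_le_if_contingent_gain_nonneg:
  fixes x y \<delta> cL cH B :: real
  assumes "0 \<le> \<delta>" "-\<delta> \<le> x" "y \<le> \<delta>"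
    and "-B \<le> cL" "cL \<le> -1" "1 \<le> cH" "cH \<le> B" and gain: "0 \<le> x * cL + y * cH"
  shows "\<bar>x\<bar> \<le> B * \<delta>" "\<bar>y\<bar> \<le> B * \<delta>"
proof -
  have \<delta>: "\<delta> \<le> B * \<delta>"
    using assms(1,6,7) mult_right_mono[of 1 B \<delta>] by simp
  have "x \<le> B * \<delta>" if "0 < x"
  proof -
    have "x \<le> x * - cL" using that assms(5) mult_left_mono[of 1 "-cL" x] by simp
    also have "\<dots> \<le> y * cH" using gain by simp
    finally have "x \<le> y * cH" .
    with that have "0 < y * cH" by linarith
    with assms(6) have "0 \<le> y" by (simp add: zero_less_mult_iff)
    then have "y * cH \<le> \<delta> * B" using assms(1,3,6,7) by (intro mult_mono) auto
    with \<open>x \<le> y * cH\<close> show ?thesis by (simp add: mult.commute)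
  qed
  moreover have "- y \<le> B * \<delta>" if "y < 0"
  proof -
    have "- y \<le> - y * cH" using that assms(6) mult_left_mono[of 1 cH "-y"] by simp
    also have "\<dots> \<le> (- x) * (- cL)" using gain by simp
    finally have "- y \<le> (- x) * (- cL)" .
    with that have "0 < (- x) * (- cL)" by linarith
    with assms(5) have "0 \<le> - x" by (simp add: zero_less_mult_iff)
    then have "(- x) * (- cL) \<le> \<delta> * B" using assms(2,4,5) by (intro mult_mono) auto
    with \<open>- y \<le> (- x) * (- cL)\<close> show ?thesis by (simp add: mult.commute)
  qed
  ultimately show "\<bar>x\<bar> \<le> B * \<delta>" "\<bar>y\<bar> \<le> B * \<delta>"
    using assms(1,2,3) \<delta> by (smt (verit))+
qed

lemma signs_if_friendly_and_unfriendly_gains_nonneg: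
  fixes x y fL fH uL uH :: real
  assumes "0 < fL" "fL < fH" "uL < uH" "uH < 0"
    and friendly_gain: "0 \<le> x * fL + y * fH" and unfriendly_gain: "0 \<le> x * uL + y * uH"
  shows "x \<le> 0" "0 \<le> y"
proof -
  show "x \<le> 0"
  proof (rule ccontr)
    assume "\<not> x \<le> 0"
    then have "0 < x" by simp
    have "x * uL < 0" using \<open>0 < x\<close> assms(3,4) by (simp add: mult_pos_neg)
    with unfriendly_gain have "0 < y * uH" by linarith
    with assms(4) have "y < 0" by (simp add: zero_less_mult_iff)
    have "- y * fL < - y * fH" using \<open>y < 0\<close> assms(2) by simp
    also have "\<dots> \<le> x * fL" using friendly_gain by simp
    finally have "- y < x"
      by (rule mult_right_less_imp_less) (use assms(1) in simp)
    have "x * - uH < x * - uL" using \<open>0 < x\<close> assms(3) by simp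
    also have "\<dots> \<le> - y * - uH" using unfriendly_gain by simp
    finally have "x < - y"
      by (rule mult_right_less_imp_less) (use assms(4) in simp)
    with \<open>- y < x\<close> show False by simp
  qed
  then have "x * fL \<le> 0" using assms(1) by (simp add: mult_nonpos_nonneg)
  then have "0 \<le> y * fH" using friendly_gain by linarith
  then show "0 \<le> y" using assms(1,2) by (simp add: zero_le_mult_iff)
qed

lemma gain_le_if_contingent_gain_nonneg:
  fixes x y \<delta> cL cH a b B :: real
  assumes "0 \<le> \<delta>" "-\<delta> \<le> x" "y \<le> \<delta>"
    and "-B \<le> cL" "cL \<le> -1" "1 \<le> cH" "cH \<le> B" "0 \<le> x * cL + y * cH"
    and "\<bar>a\<bar> \<le> B" "\<bar>b\<bar> \<le> B"
  shows "x * a + y * b \<le> 2 * B * (B + 1) * \<delta>"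
proof -
  have "x * a + y * b \<le> 2 * B * (B * \<delta>)"
    using gain_le_if_abs_le abs_le_if_contingent_gain_nonneg[OF assms(1-8)] assms(9,10) by blast
  also have "\<dots> \<le> 2 * B * (B * \<delta>) + 2 * (B * \<delta>)"
    using assms(1,6,7) by simp
  finally show ?thesis by (simp add: algebra_simps)
qed

lemma gain_le_if_friendly_and_unfriendly_gains_nonneg:
  fixes x y \<delta> fL fH uL uH a b B :: real
  assumes "-\<delta> \<le> x" "y \<le> \<delta>"
    and "0 < fL" "fL < fH" "uL < uH" "uH < 0" "0 \<le> x * fL + y * fH" "0 \<le> x * uL + y * uH"
    and "\<bar>a\<bar> \<le> B" "\<bar>b\<bar> \<le> B"
  shows "x * a + y * b \<le> 2 * B * (B + 1) * \<delta>"
proof -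
  note signs = signs_if_friendly_and_unfriendly_gains_nonneg[OF assms(3-8)]
  then have "\<bar>x\<bar> \<le> \<delta>" "\<bar>y\<bar> \<le> \<delta>"
    using assms(1,2) by auto
  then have "x * a + y * b \<le> 2 * B * \<delta>"
    using gain_le_if_abs_le assms(9,10) by blast
  also have "\<dots> \<le> 2 * B * \<delta> + 2 * B * (B * \<delta>)"
    using signs assms(2,9) abs_ge_zero[of a] by simp
  finally show ?thesis by (simp add: algebra_simps)
qed

context
  fixes Ps :: "signal \<Rightarrow> world \<Rightarrow> real"
  assumes Ps_nonneg: "\<And>s w. 0 \<le> Ps s w" and Ps_sum: "\<And>w. Ps Sl w + Ps Sh w = 1"
begin

lemma pvote_bounds:
  assumes "valid_profile N \<Sigma>" and "n < N"
  shows "0 \<le> pvote Ps \<Sigma> w n" "pvote Ps \<Sigma> w n \<le> 1"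
proof -
  have "0 \<le> fst (\<Sigma> n)" "fst (\<Sigma> n) \<le> 1" "0 \<le> snd (\<Sigma> n)" "snd (\<Sigma> n) \<le> 1"
    using assms unfolding valid_profile_def by auto
  moreover note Ps_nonneg[of Sl w] Ps_nonneg[of Sh w] Ps_sum[of w]
  ultimately show "0 \<le> pvote Ps \<Sigma> w n" "pvote Ps \<Sigma> w n \<le> 1"
    unfolding pvote_def by (simp_all add: convex_bound_le)
qed

lemma lam_Acc_bounds:
  assumes "valid_profile N \<Sigma>"
  shows "0 \<le> lam N \<mu> Ps \<Sigma> w Acc" "lam N \<mu> Ps \<Sigma> w Acc \<le> 1"
    and "lam N \<mu> Ps \<Sigma> w Rej = 1 - lam N \<mu> Ps \<Sigma> w Acc"
proof -
  note pvote = pvote_bounds[OF assms]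
  have sum: "lam N \<mu> Ps \<Sigma> w Acc + lam N \<mu> Ps \<Sigma> w Rej = 1"
    using random_subset_prob_compl[of "{..<N}" "pvote Ps \<Sigma> w" "wins N \<mu> Acc"]
    by (simp add: lam_eq_random_subset_prob wins_Rej_iff[abs_def])
  have "0 \<le> lam N \<mu> Ps \<Sigma> w Acc" "0 \<le> lam N \<mu> Ps \<Sigma> w Rej"
    unfolding lam_eq_random_subset_prob using pvote
    by (auto intro!: random_subset_prob_nonneg)
  with sum show "0 \<le> lam N \<mu> Ps \<Sigma> w Acc" "lam N \<mu> Ps \<Sigma> w Acc \<le> 1"
    and "lam N \<mu> Ps \<Sigma> w Rej = 1 - lam N \<mu> Ps \<Sigma> w Acc"
    by linarith+
qed

lemma lam_Acc_mono:
  assumes "valid_profile N \<Sigma>" "valid_profile N \<Sigma>'"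
    and "\<And>n. n < N \<Longrightarrow> pvote Ps \<Sigma> w n \<le> pvote Ps \<Sigma>' w n"
  shows "lam N \<mu> Ps \<Sigma> w Acc \<le> lam N \<mu> Ps \<Sigma>' w Acc"
  unfolding lam_eq_random_subset_prob
  using assms pvote_bounds[OF assms(1)] pvote_bounds[OF assms(2)]
  by (intro random_subset_prob_mono_upclosed wins_Acc_insert) auto

lemma lam_Acc_le_if_deviators_always_Acc:
  assumes "valid_profile N \<Sigma>" "valid_profile N \<Sigma>'"
    and "\<And>n. n < N \<Longrightarrow> n \<notin> D \<Longrightarrow> \<Sigma>' n = \<Sigma> n" and "\<And>n. n \<in> D \<Longrightarrow> \<Sigma> n = (1, 1)"
  shows "lam N \<mu> Ps \<Sigma>' w Acc \<le> lam N \<mu> Ps \<Sigma> w Acc"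
proof (rule lam_Acc_mono[OF assms(2,1)])
  fix n assume "n < N"
  then show "pvote Ps \<Sigma>' w n \<le> pvote Ps \<Sigma> w n"
  proof (cases "n \<in> D")
    case True
    then show ?thesis
      using assms(4) \<open>n < N\<close> pvote_bounds[OF assms(2)] pvote_always_Acc[of Ps w, OF Ps_sum] by simp
  qed (simp add: assms(3) pvote_def)
qed

lemma lam_Acc_ge_if_deviators_always_Rej:
  assumes "valid_profile N \<Sigma>" "valid_profile N \<Sigma>'"
    and "\<And>n. n < N \<Longrightarrow> n \<notin> D \<Longrightarrow> \<Sigma>' n = \<Sigma> n" and "\<And>n. n \<in> D \<Longrightarrow> \<Sigma> n = (0, 0)"
  shows "lam N \<mu> Ps \<Sigma> w Acc \<le> lam N \<mu> Ps \<Sigma>' w Acc"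
proof (rule lam_Acc_mono[OF assms(1,2)])
  fix n assume "n < N"
  then show "pvote Ps \<Sigma> w n \<le> pvote Ps \<Sigma>' w n"
  proof (cases "n \<in> D")
    case True
    then show ?thesis
      using assms(4) \<open>n < N\<close> pvote_bounds[OF assms(2)] pvote_always_Rej by simp
  qed (simp add: assms(3) pvote_def)
qed

lemma utility_diff:
  assumes "valid_profile N \<Sigma>" "valid_profile N \<Sigma>'"
  shows "utility N \<mu> Pw Ps v n \<Sigma>' - utility N \<mu> Pw Ps v n \<Sigma>
    = Pw L * (lam N \<mu> Ps \<Sigma>' L Acc - lam N \<mu> Ps \<Sigma> L Acc) * acc_premium (v n) L
    + Pw H * (lam N \<mu> Ps \<Sigma>' H Acc - lam N \<mu> Ps \<Sigma> H Acc) * acc_premium (v n) H"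
  unfolding utility_def acc_premium_def
    lam_Acc_bounds(3)[OF assms(1)]
    lam_Acc_bounds(3)[OF assms(2)]
  by (simp add: algebra_simps)

lemma acc_shift_le_fidelity_loss:
  assumes "0 \<le> Pw L" "0 \<le> Pw H" "Pw L + Pw H = 1"
    and "valid_profile N \<Sigma>" "valid_profile N \<Sigma>'"
  shows "0 \<le> 1 - fidelity N \<mu> Pw Ps \<Sigma>"
    and "- (1 - fidelity N \<mu> Pw Ps \<Sigma>) \<le> Pw L * (lam N \<mu> Ps \<Sigma>' L Acc - lam N \<mu> Ps \<Sigma> L Acc)"
    and "Pw H * (lam N \<mu> Ps \<Sigma>' H Acc - lam N \<mu> Ps \<Sigma> H Acc) \<le> 1 - fidelity N \<mu> Pw Ps \<Sigma>"
proof -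
  note lam = lam_Acc_bounds
  have loss: "1 - fidelity N \<mu> Pw Ps \<Sigma>
      = Pw L * lam N \<mu> Ps \<Sigma> L Acc + Pw H * (1 - lam N \<mu> Ps \<Sigma> H Acc)"
    using assms(3) unfolding fidelity_def lam(3)[OF assms(4)] by (simp add: algebra_simps)
  have "0 \<le> Pw L * lam N \<mu> Ps \<Sigma> L Acc" "0 \<le> Pw H * (1 - lam N \<mu> Ps \<Sigma> H Acc)"
    "0 \<le> Pw L * lam N \<mu> Ps \<Sigma>' L Acc" "0 \<le> Pw H * (1 - lam N \<mu> Ps \<Sigma>' H Acc)"
    using assms lam(1,2)[OF assms(4)] lam(1,2)[OF assms(5)] by simp_all
  then show "0 \<le> 1 - fidelity N \<mu> Pw Ps \<Sigma>"
    and "- (1 - fidelity N \<mu> Pw Ps \<Sigma>) \<le> Pw L * (lam N \<mu> Ps \<Sigma>' L Acc - lam N \<mu> Ps \<Sigma> L Acc)"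
    and "Pw H * (lam N \<mu> Ps \<Sigma>' H Acc - lam N \<mu> Ps \<Sigma> H Acc) \<le> 1 - fidelity N \<mu> Pw Ps \<Sigma>"
    unfolding loss by (simp_all add: algebra_simps)
qed

lemma utility_le_if_friendly_and_deviators_always_Acc:
  assumes "0 \<le> Pw L" "0 \<le> Pw H" and valid: "valid_profile N \<Sigma>" "valid_profile N \<Sigma>'"
    and same: "\<And>n. n < N \<Longrightarrow> n \<notin> D \<Longrightarrow> \<Sigma>' n = \<Sigma> n"
    and always: "\<And>n. n \<in> D \<Longrightarrow> \<Sigma> n = (1, 1)"
    and "friendly (v m)"
  shows "utility N \<mu> Pw Ps v m \<Sigma>' \<le> utility N \<mu> Pw Ps v m \<Sigma>"
proof -
  have "Pw w * (lam N \<mu> Ps \<Sigma>' w Acc - lam N \<mu> Ps \<Sigma> w Acc) * acc_premium (v m) w \<le> 0"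
    if "0 \<le> Pw w" "0 \<le> acc_premium (v m) w" for w
  proof -
    have "lam N \<mu> Ps \<Sigma>' w Acc \<le> lam N \<mu> Ps \<Sigma> w Acc"
      by (rule lam_Acc_le_if_deviators_always_Acc[OF valid same always])
    with that show ?thesis by (simp add: mult_nonneg_nonpos mult_nonpos_nonneg)
  qed
  from this[of L] this[of H] show ?thesis
    using assms(1,2) friendly_acc_premium[OF assms(7)] utility_diff[OF valid, of \<mu> Pw v m] by simp
qed

lemma utility_le_if_unfriendly_and_deviators_always_Rej:
  assumes "0 \<le> Pw L" "0 \<le> Pw H" and valid: "valid_profile N \<Sigma>" "valid_profile N \<Sigma>'"
    and same: "\<And>n. n < N \<Longrightarrow> n \<notin> D \<Longrightarrow> \<Sigma>' n = \<Sigma> n"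
    and always: "\<And>n. n \<in> D \<Longrightarrow> \<Sigma> n = (0, 0)"
    and "unfriendly (v m)"
  shows "utility N \<mu> Pw Ps v m \<Sigma>' \<le> utility N \<mu> Pw Ps v m \<Sigma>"
proof -
  have "Pw w * (lam N \<mu> Ps \<Sigma>' w Acc - lam N \<mu> Ps \<Sigma> w Acc) * acc_premium (v m) w \<le> 0"
    if "0 \<le> Pw w" "acc_premium (v m) w \<le> 0" for w
  proof -
    have "lam N \<mu> Ps \<Sigma> w Acc \<le> lam N \<mu> Ps \<Sigma>' w Acc"
      by (rule lam_Acc_ge_if_deviators_always_Rej[OF valid same always])
    with that show ?thesis by (simp add: mult_nonneg_nonpos)
  qed
  from this[of L] this[of H] show ?thesis
    using assms(1,2) unfriendly_acc_premium[OF assms(7)] utility_diff[OF valid, of \<mu> Pw v m] by simp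
qed

lemma utility_le_if_homogeneous_deviation:
  assumes "0 \<le> Pw L" "0 \<le> Pw H" and reg: "regular N v \<Sigma>" and D: "D \<subseteq> {..<N}"
    and valid: "valid_profile N \<Sigma>" "valid_profile N \<Sigma>'"
    and same: "\<And>n. n < N \<Longrightarrow> n \<notin> D \<Longrightarrow> \<Sigma>' n = \<Sigma> n"
    and homogeneous: "(\<forall>n\<in>D. friendly (v n)) \<or> (\<forall>n\<in>D. unfriendly (v n))" and "m \<in> D"
  shows "utility N \<mu> Pw Ps v m \<Sigma>' \<le> utility N \<mu> Pw Ps v m \<Sigma>"
  using homogeneous
proof
  assume friendly: "\<forall>n\<in>D. friendly (v n)"
  then have "\<Sigma> n = (1, 1)" if "n \<in> D" for n
    using that D reg unfolding regular_def by auto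
  with friendly \<open>m \<in> D\<close> show ?thesis
    by (intro utility_le_if_friendly_and_deviators_always_Acc[OF assms(1,2) valid same]) auto
next
  assume unfriendly: "\<forall>n\<in>D. unfriendly (v n)"
  then have "\<Sigma> n = (0, 0)" if "n \<in> D" for n
    using that D reg unfolding regular_def by auto
  with unfriendly \<open>m \<in> D\<close> show ?thesis
    by (intro utility_le_if_unfriendly_and_deviators_always_Rej[OF assms(1,2) valid same]) auto
qed

lemma regular_deviation_gain_le:
  assumes Pw: "0 \<le> Pw L" "0 \<le> Pw H" "Pw L + Pw H = 1"
    and vbound: "\<And>n w X. n < N \<Longrightarrow> v n w X \<le> B"
    and types: "\<And>n. n < N \<Longrightarrow> friendly (v n) \<or> unfriendly (v n) \<or> contingent (v n)"
    and valid: "valid_profile N \<Sigma>" and reg: "regular N v \<Sigma>"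
    and D: "D \<subseteq> {..<N}" and valid': "valid_profile N \<Sigma>'"
    and same: "\<And>n. n < N \<Longrightarrow> n \<notin> D \<Longrightarrow> \<Sigma>' n = \<Sigma> n"
    and weak: "\<And>n. n \<in> D \<Longrightarrow> utility N \<mu> Pw Ps v n \<Sigma> \<le> utility N \<mu> Pw Ps v n \<Sigma>'"
    and "m \<in> D"
  shows "utility N \<mu> Pw Ps v m \<Sigma>'
    \<le> utility N \<mu> Pw Ps v m \<Sigma> + 2 * real B * (real B + 1) * (1 - fidelity N \<mu> Pw Ps \<Sigma>)"
proof -
  define x where "x = Pw L * (lam N \<mu> Ps \<Sigma>' L Acc - lam N \<mu> Ps \<Sigma> L Acc)"
  define y where "y = Pw H * (lam N \<mu> Ps \<Sigma>' H Acc - lam N \<mu> Ps \<Sigma> H Acc)"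
  define \<delta> where "\<delta> = 1 - fidelity N \<mu> Pw Ps \<Sigma>"
  define a where "a n = acc_premium (v n) L" for n
  define b where "b n = acc_premium (v n) H" for n
  have gain: "utility N \<mu> Pw Ps v n \<Sigma>' - utility N \<mu> Pw Ps v n \<Sigma> = x * a n + y * b n" for n
    unfolding utility_diff[OF valid valid'] x_def y_def a_def b_def ..
  have \<delta>: "0 \<le> \<delta>" "-\<delta> \<le> x" "y \<le> \<delta>"
    using acc_shift_le_fidelity_loss[OF Pw valid valid'] unfolding x_def y_def \<delta>_def by auto
  have gain_nonneg: "0 \<le> x * a n + y * b n" if "n \<in> D" for n
    using weak[OF that] gain[of n] by simp
  have premium_bounds: "\<bar>a n\<bar> \<le> B" "\<bar>b n\<bar> \<le> B" if "n \<in> D" for n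
    using that D vbound unfolding a_def b_def by (auto intro!: abs_acc_premium_le)
  have member_types: "friendly (v n) \<or> unfriendly (v n) \<or> contingent (v n)" if "n \<in> D" for n
    using that D types by auto
  have \<epsilon>: "0 \<le> 2 * real B * (real B + 1) * \<delta>"
    using \<delta>(1) by simp
  consider (contingent) c where "c \<in> D" "contingent (v c)"
    | (mixed) f u where "f \<in> D" "friendly (v f)" "u \<in> D" "unfriendly (v u)"
    | (homogeneous) "(\<forall>n\<in>D. friendly (v n)) \<or> (\<forall>n\<in>D. unfriendly (v n))"
    using member_types by metis
  then have "utility N \<mu> Pw Ps v m \<Sigma>' - utility N \<mu> Pw Ps v m \<Sigma> \<le> 2 * real B * (real B + 1) * \<delta>"
  proof cases
    case contingent
    then have "- real B \<le> a c" "a c \<le> -1" "1 \<le> b c" "b c \<le> real B"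
      using contingent_acc_premium[of "v c"] premium_bounds[of c]
      unfolding a_def b_def by (auto simp: abs_le_iff)
    from gain_le_if_contingent_gain_nonneg[OF \<delta> this gain_nonneg[OF \<open>c \<in> D\<close>]
        premium_bounds[OF \<open>m \<in> D\<close>]]
    show ?thesis unfolding gain .
  next
    case mixed
    then have "0 < a f" "a f < b f" "a u < b u" "b u < 0"
      using friendly_acc_premium[of "v f"] unfriendly_acc_premium[of "v u"]
      unfolding a_def b_def by auto
    from gain_le_if_friendly_and_unfriendly_gains_nonneg[OF \<delta>(2,3) this
        gain_nonneg[OF \<open>f \<in> D\<close>] gain_nonneg[OF \<open>u \<in> D\<close>] premium_bounds[OF \<open>m \<in> D\<close>]]
    show ?thesis unfolding gain .
  next
    case homogeneous
    have "utility N \<mu> Pw Ps v m \<Sigma>' \<le> utility N \<mu> Pw Ps v m \<Sigma>"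
      by (rule utility_le_if_homogeneous_deviation[OF Pw(1,2) reg D valid valid' same homogeneous
            \<open>m \<in> D\<close>])
    with \<epsilon> show ?thesis by linarith
  qed
  then show ?thesis
    unfolding \<delta>_def by linarith
qed

end

theorem lemma1:
  fixes N B :: nat and \<mu> \<alpha>F \<alpha>U \<alpha>C :: real
    and Pw :: "world \<Rightarrow> real" and Ps :: "signal \<Rightarrow> world \<Rightarrow> real"
    and v :: "nat \<Rightarrow> world \<Rightarrow> outcome \<Rightarrow> nat" and \<Sigma> :: "nat \<Rightarrow> real \<times> real"
  assumes prior: "Pw L > 0" "Pw H > 0" "Pw L + Pw H = 1"
    and sig: "\<And>s w. 0 \<le> Ps s w" "\<And>w. Ps Sl w + Ps Sh w = 1"
    and sig_inf: "Ps Sh H > Ps Sh L" "Ps Sl H < Ps Sl L"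
    and mu: "0 < \<mu>" "\<mu> < 1"
    and B: "B > 0"
    and vbound: "\<And>n w X. n < N \<Longrightarrow> v n w X \<le> B"
    and vmono: "\<And>n. n < N \<Longrightarrow> v n H Acc > v n L Acc \<and> v n H Rej < v n L Rej"
    and types: "\<And>n. n < N \<Longrightarrow> friendly (v n) \<or> unfriendly (v n) \<or> contingent (v n)"
    and alpha: "\<alpha>F \<ge> 0" "\<alpha>U \<ge> 0" "\<alpha>C \<ge> 0" "\<alpha>F + \<alpha>U + \<alpha>C = 1"
    and nF: "card {n. n < N \<and> friendly (v n)} = nat \<lfloor>\<alpha>F * real N\<rfloor>"
    and nU: "card {n. n < N \<and> unfriendly (v n)} = nat \<lfloor>\<alpha>U * real N\<rfloor>"
    and standing: "\<alpha>F < \<mu>" "\<alpha>U < 1 - \<mu>"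
    and valid: "valid_profile N \<Sigma>"
    and reg: "regular N v \<Sigma>"
  shows "eps_strong_BNE N \<mu> Pw Ps v (2 * real B * (real B + 1) * (1 - fidelity N \<mu> Pw Ps \<Sigma>)) \<Sigma>"
  unfolding eps_strong_BNE_def
proof
  assume "\<exists>D \<Sigma>'. D \<subseteq> {..<N} \<and> valid_profile N \<Sigma>' \<and> (\<forall>n<N. n \<notin> D \<longrightarrow> \<Sigma>' n = \<Sigma> n)
    \<and> (\<forall>n\<in>D. utility N \<mu> Pw Ps v n \<Sigma>' \<ge> utility N \<mu> Pw Ps v n \<Sigma>)
    \<and> (\<exists>n\<in>D. utility N \<mu> Pw Ps v n \<Sigma>'
          > utility N \<mu> Pw Ps v n \<Sigma> + 2 * real B * (real B + 1) * (1 - fidelity N \<mu> Pw Ps \<Sigma>))"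
  then obtain D \<Sigma>' m where deviation: "D \<subseteq> {..<N}" "valid_profile N \<Sigma>'"
      "\<And>n. n < N \<Longrightarrow> n \<notin> D \<Longrightarrow> \<Sigma>' n = \<Sigma> n"
      "\<And>n. n \<in> D \<Longrightarrow> utility N \<mu> Pw Ps v n \<Sigma> \<le> utility N \<mu> Pw Ps v n \<Sigma>'"
      "m \<in> D"
    and improves: "utility N \<mu> Pw Ps v m \<Sigma>'
      > utility N \<mu> Pw Ps v m \<Sigma> + 2 * real B * (real B + 1) * (1 - fidelity N \<mu> Pw Ps \<Sigma>)"
    by blast
  have "utility N \<mu> Pw Ps v m \<Sigma>'
      \<le> utility N \<mu> Pw Ps v m \<Sigma> + 2 * real B * (real B + 1) * (1 - fidelity N \<mu> Pw Ps \<Sigma>)"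
    by (rule regular_deviation_gain_le[OF sig _ _ prior(3) vbound types valid reg deviation])
      (use prior in simp_all)
  with improves show False by simp
qed

end
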